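(* Let $d\ge 1$ and let $D$ be a collection of at most $d$ simplices over $[n]$, each of dimension at most $d$. Then every $(d-1)$-cycle supported on $K(D)$ is a $(d-1)$-boundary of $K(D)$; that is, every such cycle $Z$ can be written as $Z=\sum_{\sigma\in D,\ \dim\sigma=d} c_\sigma\,\partial\sigma$ with $c_\sigma\in\mathbb F$. Equivalently, $\tilde H_{d-1}(K(D))=0$.
   Context: Fix a field $\mathbb F$ and an integer $n\ge 1$. A $d$-simplex is a subset $\sigma\subseteq[n]$ with $|\sigma|=d+1$, oriented by listing its elements in increasing order $s_1<\dots<s_{d+1}$; the empty set is the unique $(-1)$-simplex. A simplicial complex is a family of simplices closed under taking subsets (faces). For a set $S$ of simplices, $K(S)$ denotes the simplicial complex consisting of all subsets of members of $S$. A $d$-chain is a formal $\mathbb F$-linear combination of $d$-simplices; its support $\mathrm{Supp}$ is the set of simplices with nonzero coefficient, and it is supported on a complex $K$ if its support lies in $K$. The boundary operator is $\partial\sigma=\sum_{i=1}^{d+1}(-1)^{i-1}(\sigma\setminus\{s_i\})$, extended linearly (so the boundary of a vertex is the empty simplex; reduced homology convention). A $d$-cycle is a $d$-chain $Z$ with $\partial Z=0$; it is a $d$-boundary of $K$ if $Z=\partial B$ for some $(d+1)$-chain $B$ supported on $K$. $\tilde H_d(K)$ is the quotient of the space of $d$-cycles supported on $K$ by the space of $d$-boundaries of $K$. *)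

theory Defs
  imports Main
begin

text \<open>Simplices over [n] = {1..n} are finite sets of naturals contained in {1..n};
  a k-simplex has cardinality k+1 (the empty set is the (-1)-simplex).\<close>

definition simplex :: "nat \<Rightarrow> nat set \<Rightarrow> bool" where
  "simplex n \<sigma> \<longleftrightarrow> \<sigma> \<subseteq> {1..n}"

definition cplx :: "nat set set \<Rightarrow> nat set set" where
  "cplx S = {\<tau>. \<exists>\<sigma>\<in>S. \<tau> \<subseteq> \<sigma>}"

text \<open>A chain all of whose support simplices lie in [n] and have cardinality m
  (i.e. an (m-1)-chain).\<close>
definition chain :: "nat \<Rightarrow> nat \<Rightarrow> (nat set \<Rightarrow> 'a::field) \<Rightarrow> bool" where
  "chain n m c \<longleftrightarrow> (\<forall>\<sigma>. c \<sigma> \<noteq> 0 \<longrightarrow> simplex n \<sigma> \<and> card \<sigma> = m)"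

definition supported_on :: "(nat set \<Rightarrow> 'a::field) \<Rightarrow> nat set set \<Rightarrow> bool" where
  "supported_on c K \<longleftrightarrow> (\<forall>\<sigma>. c \<sigma> \<noteq> 0 \<longrightarrow> \<sigma> \<in> K)"

text \<open>For \<sigma> = insert v \<tau> with v \<notin> \<tau>, v is the i-th element of \<sigma>
  with i - 1 = card {x \<in> \<tau>. x < v}, so \<partial>\<sigma> contributes (-1)^(i-1) to \<tau>.\<close>
definition bd :: "nat \<Rightarrow> (nat set \<Rightarrow> 'a::field) \<Rightarrow> nat set \<Rightarrow> 'a" where
  "bd n c \<tau> = (\<Sum>v\<in>{1..n} - \<tau>. (-1) ^ card {x\<in>\<tau>. x < v} * c (insert v \<tau>))"

definition is_cycle :: "nat \<Rightarrow> nat \<Rightarrow> nat set set \<Rightarrow> (nat set \<Rightarrow> 'a::field) \<Rightarrow> bool" where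
  "is_cycle n m K Z \<longleftrightarrow> chain n m Z \<and> supported_on Z K \<and> bd n Z = (\<lambda>_. 0)"

definition is_boundary :: "nat \<Rightarrow> nat \<Rightarrow> nat set set \<Rightarrow> (nat set \<Rightarrow> 'a::field) \<Rightarrow> bool" where
  "is_boundary n m K Z \<longleftrightarrow>
     (\<exists>B. chain n (m + 1) B \<and> supported_on B K \<and> Z = bd n B)"

end

theory Submission
  imports Defs
begin

text \<open>Induction on the number of simplices, in the spirit of Mayer--Vietoris.
  Write \<open>D = D' \<union> {\<sigma>}\<close> and split a \<open>(d-1)\<close>-cycle \<open>Z = A + R\<close> with \<open>A\<close> on \<open>K(D')\<close> and \<open>R\<close> on
  \<open>K(\<sigma>)\<close>. Then \<open>\<partial>A = -\<partial>R\<close> is a \<open>(d-2)\<close>-cycle on \<open>K(D') \<inter> K(\<sigma>) = K{\<tau> \<inter> \<sigma> | \<tau> \<in> D'}\<close>, a complex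
  generated by at most \<open>d-1\<close> simplices, so by induction \<open>\<partial>A = \<partial>C\<close> there. Now \<open>A - C\<close> is a cycle
  on \<open>K(D')\<close>, a boundary by induction, and \<open>R + C\<close> is a cycle on the full simplex \<open>K(\<sigma>)\<close>, a
  boundary by the cone construction. Finally, a \<open>d\<close>-chain on \<open>K(D)\<close> can only live on the
  \<open>d\<close>-simplices of \<open>D\<close> themselves.\<close>

lemma simplex_finite: "simplex n \<sigma> \<Longrightarrow> finite \<sigma>"
  unfolding simplex_def using finite_subset by blast

lemma finite_simplex_family: "\<forall>\<sigma>\<in>D. simplex n \<sigma> \<Longrightarrow> finite D"
  unfolding simplex_def by (rule finite_subset[of _ "Pow {1..n}"]) auto

lemma cplx_Int_cplx_singleton: "cplx D \<inter> cplx {\<sigma>} = cplx ((\<lambda>\<tau>. \<tau> \<inter> \<sigma>) ` D)"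
  unfolding cplx_def by auto

lemma chain_add: "chain n m f \<Longrightarrow> chain n m g \<Longrightarrow> chain n m (\<lambda>x. f x + g x)"
  unfolding chain_def by (metis add.right_neutral add_0)

lemma chain_diff: "chain n m f \<Longrightarrow> chain n m g \<Longrightarrow> chain n m (\<lambda>x. f x - g x)"
  unfolding chain_def by (metis diff_zero diff_self)

lemma supported_on_add:
  "supported_on f K \<Longrightarrow> supported_on g K \<Longrightarrow> supported_on (\<lambda>x. f x + g x) K"
  unfolding supported_on_def by (metis add.right_neutral add_0)

lemma supported_on_diff:
  "supported_on f K \<Longrightarrow> supported_on g K \<Longrightarrow> supported_on (\<lambda>x. f x - g x) K"
  unfolding supported_on_def by (metis diff_zero diff_self)

lemma supported_on_mono: "supported_on f K \<Longrightarrow> K \<subseteq> L \<Longrightarrow> supported_on f L"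
  unfolding supported_on_def by auto

lemma supported_on_Int: "supported_on f K \<Longrightarrow> supported_on f L \<Longrightarrow> supported_on f (K \<inter> L)"
  unfolding supported_on_def by auto

lemma bd_add: "bd n (\<lambda>x. f x + g x) = (\<lambda>\<tau>. bd n f \<tau> + bd n g \<tau>)"
  unfolding bd_def by (auto simp: sum.distrib algebra_simps)

lemma bd_diff: "bd n (\<lambda>x. f x - g x) = (\<lambda>\<tau>. bd n f \<tau> - bd n g \<tau>)"
  unfolding bd_def by (auto simp: sum_subtractf algebra_simps)

lemma bd_zero [simp]: "bd n (\<lambda>_. 0::'a::field) = (\<lambda>_. 0)"
  unfolding bd_def by auto

lemma is_boundary_zero: "is_boundary n m K (\<lambda>_. 0::'a::field)"
  unfolding is_boundary_def chain_def supported_on_def by (intro exI[of _ "\<lambda>_. 0"]) auto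

lemma bd_nonzeroE:
  assumes "bd n c \<tau> \<noteq> 0"
  obtains v where "v \<in> {1..n} - \<tau>" "c (insert v \<tau>) \<noteq> 0"
proof -
  from assms obtain v where "v \<in> {1..n} - \<tau>" "(-1) ^ card {x\<in>\<tau>. x < v} * c (insert v \<tau>) \<noteq> 0"
    unfolding bd_def by (meson sum.not_neutral_contains_not_neutral)
  then show ?thesis using that by auto
qed

lemma chain_bd:
  assumes "chain n m c"
  shows "chain n (m - 1) (bd n c)"
  unfolding chain_def
proof (intro allI impI)
  fix \<tau> assume "bd n c \<tau> \<noteq> 0"
  then obtain v where v: "v \<in> {1..n} - \<tau>" "c (insert v \<tau>) \<noteq> 0" by (rule bd_nonzeroE)
  with assms have "simplex n (insert v \<tau>)" "card (insert v \<tau>) = m" unfolding chain_def by auto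
  moreover from this have "finite \<tau>" using simplex_finite[of n "insert v \<tau>"] by simp
  ultimately show "simplex n \<tau> \<and> card \<tau> = m - 1" using v unfolding simplex_def by auto
qed

lemma supported_on_cplx_bd:
  assumes "supported_on c (cplx S)"
  shows "supported_on (bd n c) (cplx S)"
  unfolding supported_on_def
proof (intro allI impI)
  fix \<tau> assume "bd n c \<tau> \<noteq> 0"
  then obtain v where "c (insert v \<tau>) \<noteq> 0" by (rule bd_nonzeroE)
  then have "insert v \<tau> \<in> cplx S" using assms unfolding supported_on_def by blast
  then show "\<tau> \<in> cplx S" unfolding cplx_def by blast
qed

lemma card_less_insert:
  assumes "u \<notin> \<tau>" "(u::nat) < v"
  shows "card {x\<in>insert u \<tau>. x < v} = Suc (card {x\<in>\<tau>. x < v})"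
proof -
  have "{x\<in>insert u \<tau>. x < v} = insert u {x\<in>\<tau>. x < v}" using assms by auto
  moreover have "finite {x\<in>\<tau>. x < v}" by (rule finite_subset[of _ "{..<v}"]) auto
  ultimately show ?thesis using assms by simp
qed

text \<open>The two ways of deleting \<open>u < v\<close> from \<open>\<tau> \<union> {u, v}\<close> carry opposite signs.\<close>

lemma bd_bd: "bd n (bd n c) \<tau> = (0::'a::field)"
proof -
  define R where "R = {1..n} - \<tau>"
  define s where "s = (\<lambda>(\<tau>::nat set) v. (-1::'a) ^ card {x\<in>\<tau>. x < v})"
  define g where "g = (\<lambda>v u. s \<tau> v * s (insert v \<tau>) u * c (insert u (insert v \<tau>)))"
  have fin: "finite R" by (simp add: R_def)
  have R_minus: "\<And>v. {1..n} - insert v \<tau> = R - {v}" by (auto simp: R_def)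
  have double_sum: "bd n (bd n c) \<tau> = (\<Sum>v\<in>R. \<Sum>u\<in>R - {v}. g v u)"
    unfolding bd_def R_def[symmetric] R_minus g_def s_def
    by (simp add: sum_distrib_left mult.assoc)
  have split: "(\<Sum>u\<in>R - {v}. g v u)
      = (\<Sum>u\<in>R. if u < v then g v u else 0) + (\<Sum>u\<in>R. if v < u then g v u else 0)" for v
  proof -
    have "(\<Sum>u\<in>R - {v}. g v u)
        = (\<Sum>u\<in>R - {v}. (if u < v then g v u else 0) + (if v < u then g v u else 0))"
      by (rule sum.cong) auto
    also have "\<dots> = (\<Sum>u\<in>R. (if u < v then g v u else 0) + (if v < u then g v u else 0))"
      by (rule sum.mono_neutral_left) (use fin in auto)
    finally show ?thesis by (simp add: sum.distrib)
  qed
  have swap: "(\<Sum>v\<in>R. \<Sum>u\<in>R. if v < u then g v u else 0)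
      = (\<Sum>v\<in>R. \<Sum>u\<in>R. if u < v then g u v else 0)"
    by (rule sum.swap)
  have antisym: "g u v = - g v u" if "u < v" "u \<in> R" "v \<in> R" for u v
  proof -
    have "s (insert u \<tau>) v = - s \<tau> v"
      using card_less_insert[of u \<tau> v] that unfolding s_def R_def by auto
    moreover have "{x\<in>insert v \<tau>. x < u} = {x\<in>\<tau>. x < u}" using that by auto
    then have "s (insert v \<tau>) u = s \<tau> u" unfolding s_def by simp
    ultimately show ?thesis unfolding g_def by (simp add: insert_commute)
  qed
  have "bd n (bd n c) \<tau> = (\<Sum>v\<in>R. (\<Sum>u\<in>R. if u < v then g v u else 0)
      + (\<Sum>u\<in>R. if v < u then g v u else 0))"
    unfolding double_sum using split by simp
  also have "\<dots> = (\<Sum>v\<in>R. \<Sum>u\<in>R. if u < v then g v u + g u v else 0)"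
    unfolding sum.distrib swap by (simp add: sum.distrib[symmetric] if_distrib cong: if_cong)
  also have "\<dots> = 0"
    by (rule sum.neutral, rule ballI, rule sum.neutral) (use antisym in auto)
  finally show ?thesis .
qed

subsection \<open>The cone construction\<close>

definition cone :: "nat \<Rightarrow> (nat set \<Rightarrow> 'a::field) \<Rightarrow> nat set \<Rightarrow> 'a" where
  "cone v Z \<rho> = (if v \<in> \<rho> then Z (\<rho> - {v}) else 0)"

lemma chain_cone:
  assumes "v \<in> {1..n}" "chain n m Z"
  shows "chain n (m + 1) (cone v Z)"
  unfolding chain_def
proof (intro allI impI)
  fix \<rho> assume "cone v Z \<rho> \<noteq> 0"
  then have "v \<in> \<rho>" "Z (\<rho> - {v}) \<noteq> 0" unfolding cone_def by (auto split: if_splits)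
  then have \<rho>: "v \<in> \<rho>" "simplex n (\<rho> - {v})" "card (\<rho> - {v}) = m"
    using assms(2) unfolding chain_def by auto
  then have "finite \<rho>" using simplex_finite[of n "\<rho> - {v}"] by simp
  then have "card \<rho> = Suc (card (\<rho> - {v}))" using \<rho>(1) by (rule card.remove)
  then have "card \<rho> = m + 1" using \<rho>(3) by simp
  with \<rho> assms(1) show "simplex n \<rho> \<and> card \<rho> = m + 1"
    unfolding simplex_def by auto
qed

lemma supported_on_cone:
  assumes "v \<in> \<sigma>" "supported_on Z (cplx {\<sigma>})"
  shows "supported_on (cone v Z) (cplx {\<sigma>})"
  unfolding supported_on_def
proof (intro allI impI)
  fix \<rho> assume "cone v Z \<rho> \<noteq> 0"
  then have "\<rho> - {v} \<subseteq> \<sigma>" "v \<in> \<rho>"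
    using assms(2) unfolding cone_def supported_on_def cplx_def by (auto split: if_splits)
  then show "\<rho> \<in> cplx {\<sigma>}" using assms(1) unfolding cplx_def by auto
qed

text \<open>The apex \<open>v\<close> precedes every vertex of the support, so it always comes first and
  deleting it carries the sign \<open>+1\<close>.\<close>

lemma bd_cone_notin:
  assumes v: "v \<in> {1..n}" "v \<notin> \<tau>" and apex: "\<forall>\<tau>. Z \<tau> \<noteq> 0 \<longrightarrow> (\<forall>x\<in>\<tau>. v \<le> x)"
  shows "bd n (cone v Z) \<tau> = Z \<tau>"
proof -
  let ?t = "\<lambda>u. (-1) ^ card {x\<in>\<tau>. x < u} * cone v Z (insert u \<tau>)"
  have "bd n (cone v Z) \<tau> = ?t v + (\<Sum>u\<in>{1..n} - \<tau> - {v}. ?t u)"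
    unfolding bd_def by (rule sum.remove) (use v in auto)
  also have "(\<Sum>u\<in>{1..n} - \<tau> - {v}. ?t u) = 0"
    by (rule sum.neutral) (use v in \<open>auto simp: cone_def\<close>)
  also have "?t v = (-1) ^ card {x\<in>\<tau>. x < v} * Z \<tau>"
    using v by (simp add: cone_def)
  also have "\<dots> = Z \<tau>"
  proof (cases "Z \<tau> = 0")
    case False
    then have "{x\<in>\<tau>. x < v} = {}" using apex by force
    then show ?thesis by (metis card.empty power_0 mult_1)
  qed simp
  finally show ?thesis by simp
qed

lemma bd_cone_in:
  assumes v: "v \<in> {1..n}" "v \<in> \<tau>" and cycle: "bd n Z = (\<lambda>_. 0)"
    and apex: "\<forall>\<tau>. Z \<tau> \<noteq> 0 \<longrightarrow> (\<forall>x\<in>\<tau>. v \<le> x)"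
  shows "bd n (cone v Z) \<tau> = Z \<tau>"
proof -
  define \<tau>' where "\<tau>' = \<tau> - {v}"
  have \<tau>': "insert v \<tau>' = \<tau>" "v \<notin> \<tau>'" using v by (auto simp: \<tau>'_def)
  let ?t = "\<lambda>u. (-1) ^ card {x\<in>\<tau>'. x < u} * Z (insert u \<tau>')"
  have faces: "{1..n} - \<tau>' = insert v ({1..n} - \<tau>)" using v by (auto simp: \<tau>'_def)
  have "0 = bd n Z \<tau>'" using cycle by simp
  also have "\<dots> = ?t v + (\<Sum>u\<in>{1..n} - \<tau>. ?t u)"
    unfolding bd_def faces by (subst sum.insert) (auto simp: \<tau>' v)
  finally have sum_rest: "(\<Sum>u\<in>{1..n} - \<tau>. ?t u) = - ?t v"
    by (simp add: eq_neg_iff_add_eq_0 add.commute)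
  have "bd n (cone v Z) \<tau> = (\<Sum>u\<in>{1..n} - \<tau>. - ?t u)"
    unfolding bd_def
  proof (rule sum.cong[OF refl])
    fix u assume "u \<in> {1..n} - \<tau>"
    then have uv: "u \<noteq> v" using v by auto
    have cone_u: "cone v Z (insert u \<tau>) = Z (insert u \<tau>')"
      using v uv unfolding cone_def \<tau>'_def by (simp add: insert_Diff_if)
    show "(-1) ^ card {x\<in>\<tau>. x < u} * cone v Z (insert u \<tau>) = - ?t u"
    proof (cases "Z (insert u \<tau>') = 0")
      case False
      then have "v < u" using apex uv by force
      then have "card {x\<in>\<tau>. x < u} = Suc (card {x\<in>\<tau>'. x < u})"
        using card_less_insert[of v \<tau>' u] \<tau>' by simp
      then show ?thesis using cone_u by simp
    qed (simp add: cone_u)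
  qed
  also have "\<dots> = ?t v"
    by (simp only: sum_negf sum_rest minus_minus)
  also have "\<dots> = Z \<tau>"
  proof (cases "Z \<tau> = 0")
    case False
    then have "{x\<in>\<tau>'. x < v} = {}" using apex unfolding \<tau>'_def by force
    then show ?thesis using \<tau>' by (metis card.empty power_0 mult_1)
  qed (simp add: \<tau>')
  finally show ?thesis .
qed

lemma bd_cone:
  assumes "v \<in> {1..n}" "bd n Z = (\<lambda>_. 0)" "\<forall>\<tau>. Z \<tau> \<noteq> 0 \<longrightarrow> (\<forall>x\<in>\<tau>. v \<le> x)"
  shows "bd n (cone v Z) = Z"
proof
  fix \<tau>
  show "bd n (cone v Z) \<tau> = Z \<tau>"
    using bd_cone_in[OF assms(1) _ assms(2,3)] bd_cone_notin[OF assms(1) _ assms(3)]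
    by (cases "v \<in> \<tau>") auto
qed

lemma cycle_on_simplex_is_boundary:
  fixes Z :: "nat set \<Rightarrow> 'a::field"
  assumes \<sigma>: "simplex n \<sigma>" and "m \<ge> 1" and Z: "is_cycle n m (cplx {\<sigma>}) Z"
  shows "is_boundary n m (cplx {\<sigma>}) Z"
proof -
  have faces: "\<tau> \<subseteq> \<sigma>" "card \<tau> = m" if "Z \<tau> \<noteq> 0" for \<tau>
    using Z that unfolding is_cycle_def chain_def supported_on_def cplx_def by auto
  show ?thesis
  proof (cases "\<sigma> = {}")
    case True
    then have "Z = (\<lambda>_. 0)" using faces \<open>m \<ge> 1\<close> by fastforce
    then show ?thesis by (simp add: is_boundary_zero)
  next
    case False
    define v where "v = Min \<sigma>"
    have "finite \<sigma>" using \<sigma> by (rule simplex_finite)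
    then have v: "v \<in> \<sigma>" "\<And>x. x \<in> \<sigma> \<Longrightarrow> v \<le> x" using False by (simp_all add: v_def)
    then have v_vertex: "v \<in> {1..n}" using \<sigma> unfolding simplex_def by blast
    have apex: "\<forall>\<tau>. Z \<tau> \<noteq> 0 \<longrightarrow> (\<forall>x\<in>\<tau>. v \<le> x)"
      using faces(1) v(2) by blast
    have Z': "chain n m Z" "supported_on Z (cplx {\<sigma>})" "bd n Z = (\<lambda>_. 0)"
      using Z unfolding is_cycle_def by auto
    show ?thesis
      unfolding is_boundary_def using chain_cone[OF v_vertex Z'(1)]
        supported_on_cone[OF v(1) Z'(2)] bd_cone[OF v_vertex Z'(3) apex] by metis
  qed
qed

subsection \<open>Acyclicity of complexes generated by few simplices\<close>

lemma is_boundary_insert: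
  fixes Z :: "nat set \<Rightarrow> 'a::field"
  assumes "m \<ge> 1" and \<sigma>: "simplex n \<sigma>"
    and inter_acyclic: "\<And>W::nat set \<Rightarrow> 'a. is_cycle n (m - 1) (cplx ((\<lambda>\<tau>. \<tau> \<inter> \<sigma>) ` D)) W
      \<Longrightarrow> is_boundary n (m - 1) (cplx ((\<lambda>\<tau>. \<tau> \<inter> \<sigma>) ` D)) W"
    and D_acyclic: "\<And>Y::nat set \<Rightarrow> 'a. is_cycle n m (cplx D) Y \<Longrightarrow> is_boundary n m (cplx D) Y"
    and Z: "is_cycle n m (cplx (insert \<sigma> D)) Z"
  shows "is_boundary n m (cplx (insert \<sigma> D)) Z"
proof -
  define A where "A = (\<lambda>\<tau>. if \<tau> \<in> cplx D then Z \<tau> else 0)"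
  define R where "R = (\<lambda>\<tau>. if \<tau> \<in> cplx D then 0 else Z \<tau>)"
  have Z_split: "Z = (\<lambda>\<tau>. A \<tau> + R \<tau>)" unfolding A_def R_def by (simp add: fun_eq_iff)
  from Z have Z': "chain n m Z" "supported_on Z (cplx (insert \<sigma> D))" "bd n Z = (\<lambda>_. 0)"
    unfolding is_cycle_def by simp_all
  have A: "chain n m A" "supported_on A (cplx D)"
    using Z'(1) unfolding chain_def supported_on_def A_def by simp_all
  have R: "chain n m R" "supported_on R (cplx {\<sigma>})"
    using Z'(1,2) unfolding chain_def supported_on_def R_def cplx_def by auto
  have "(\<lambda>\<tau>. bd n A \<tau> + bd n R \<tau>) = (\<lambda>_. 0)"
    using Z'(3) unfolding Z_split bd_add .
  then have bd_R: "bd n R = (\<lambda>\<tau>. - bd n A \<tau>)"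
    by (simp add: fun_eq_iff eq_neg_iff_add_eq_0 add.commute)
  have "supported_on (bd n A) (cplx {\<sigma>})"
    using supported_on_cplx_bd[OF R(2), of n] unfolding bd_R supported_on_def by simp
  then have "supported_on (bd n A) (cplx ((\<lambda>\<tau>. \<tau> \<inter> \<sigma>) ` D))"
    unfolding cplx_Int_cplx_singleton[symmetric]
    by (rule supported_on_Int[OF supported_on_cplx_bd[OF A(2)]])
  then have "is_cycle n (m - 1) (cplx ((\<lambda>\<tau>. \<tau> \<inter> \<sigma>) ` D)) (bd n A)"
    unfolding is_cycle_def using chain_bd[OF A(1)] by (simp add: fun_eq_iff bd_bd)
  then obtain C where C: "chain n m C" "supported_on C (cplx ((\<lambda>\<tau>. \<tau> \<inter> \<sigma>) ` D))" "bd n A = bd n C"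
    using inter_acyclic \<open>m \<ge> 1\<close> unfolding is_boundary_def by (metis le_add_diff_inverse2)
  have C_faces: "supported_on C (cplx D)" "supported_on C (cplx {\<sigma>})"
    using C(2) unfolding cplx_Int_cplx_singleton[symmetric] supported_on_def by auto
  have "is_cycle n m (cplx D) (\<lambda>\<tau>. A \<tau> - C \<tau>)"
    unfolding is_cycle_def bd_diff C(3)
    using chain_diff[OF A(1) C(1)] supported_on_diff[OF A(2) C_faces(1)] by simp
  then obtain E where E: "chain n (m + 1) E" "supported_on E (cplx D)" "(\<lambda>\<tau>. A \<tau> - C \<tau>) = bd n E"
    using D_acyclic unfolding is_boundary_def by blast
  have "is_cycle n m (cplx {\<sigma>}) (\<lambda>\<tau>. R \<tau> + C \<tau>)"
    unfolding is_cycle_def bd_add bd_R C(3)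
    using chain_add[OF R(1) C(1)] supported_on_add[OF R(2) C_faces(2)] by simp
  then obtain F where F: "chain n (m + 1) F" "supported_on F (cplx {\<sigma>})" "(\<lambda>\<tau>. R \<tau> + C \<tau>) = bd n F"
    using cycle_on_simplex_is_boundary[OF \<sigma> \<open>m \<ge> 1\<close>] unfolding is_boundary_def by blast
  have "Z = bd n (\<lambda>\<tau>. E \<tau> + F \<tau>)"
    unfolding bd_add Z_split E(3)[symmetric] F(3)[symmetric] by (simp add: algebra_simps)
  moreover have "supported_on (\<lambda>\<tau>. E \<tau> + F \<tau>) (cplx (insert \<sigma> D))"
  proof -
    have "cplx D \<subseteq> cplx (insert \<sigma> D)" "cplx {\<sigma>} \<subseteq> cplx (insert \<sigma> D)"
      unfolding cplx_def by auto
    then show ?thesis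
      by (intro supported_on_add supported_on_mono[OF E(2)] supported_on_mono[OF F(2)])
  qed
  ultimately show ?thesis
    unfolding is_boundary_def using chain_add[OF E(1) F(1)] by blast
qed

lemma cycle_is_boundary_few_simplices:
  fixes Z :: "nat set \<Rightarrow> 'a::field"
  assumes "\<forall>\<sigma>\<in>D. simplex n \<sigma>" and "card D \<le> m" and "is_cycle n m (cplx D) Z"
  shows "is_boundary n m (cplx D) Z"
  using assms
proof (induction "card D" arbitrary: D m Z rule: less_induct)
  case less
  show ?case
  proof (cases "D = {}")
    case True
    then have "Z = (\<lambda>_. 0)"
      using less.prems(3) by (simp add: is_cycle_def supported_on_def cplx_def fun_eq_iff)
    then show ?thesis by (simp add: is_boundary_zero)
  next
    case False
    then obtain \<sigma> where "\<sigma> \<in> D" by blast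
    then obtain D' where D: "D = insert \<sigma> D'" "\<sigma> \<notin> D'" by (meson mk_disjoint_insert)
    have \<sigma>: "simplex n \<sigma>" using less.prems(1) D(1) by simp
    have "finite D" using less.prems(1) by (rule finite_simplex_family)
    then have card_D': "card D' < card D" using D by simp
    then have card_inter: "card ((\<lambda>\<tau>. \<tau> \<inter> \<sigma>) ` D') < card D"
      using card_image_le[of D' "\<lambda>\<tau>. \<tau> \<inter> \<sigma>"] \<open>finite D\<close> D(1) by simp
    have inter_simplices: "\<forall>\<rho>\<in>(\<lambda>\<tau>. \<tau> \<inter> \<sigma>) ` D'. simplex n \<rho>"
      using \<sigma> unfolding simplex_def by auto
    have "m \<ge> 1" using card_D' less.prems(2) by linarith
    show ?thesis
      unfolding D(1)
    proof (rule is_boundary_insert[OF \<open>m \<ge> 1\<close> \<sigma>])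
      fix W :: "nat set \<Rightarrow> 'a"
      assume "is_cycle n (m - 1) (cplx ((\<lambda>\<tau>. \<tau> \<inter> \<sigma>) ` D')) W"
      then show "is_boundary n (m - 1) (cplx ((\<lambda>\<tau>. \<tau> \<inter> \<sigma>) ` D')) W"
        using less.hyps[OF card_inter inter_simplices] card_inter less.prems(2) by simp
    next
      fix Y :: "nat set \<Rightarrow> 'a"
      assume "is_cycle n m (cplx D') Y"
      then show "is_boundary n m (cplx D') Y"
        using less.hyps[OF card_D'] less.prems(1,2) card_D' D(1) by simp
    next
      show "is_cycle n m (cplx (insert \<sigma> D')) Z" using less.prems(3) D(1) by simp
    qed
  qed
qed

lemma top_chain_on_simplices:
  assumes "chain n (d + 1) B" "supported_on B (cplx D)" "\<forall>\<sigma>\<in>D. simplex n \<sigma> \<and> card \<sigma> \<le> d + 1"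
  shows "B = (\<lambda>\<sigma>. if \<sigma> \<in> D \<and> card \<sigma> = d + 1 then B \<sigma> else 0)"
proof
  fix \<rho>
  show "B \<rho> = (if \<rho> \<in> D \<and> card \<rho> = d + 1 then B \<rho> else 0)"
  proof (cases "B \<rho> = 0")
    case False
    then obtain \<sigma> where \<sigma>: "\<sigma> \<in> D" "\<rho> \<subseteq> \<sigma>"
      using assms(2) unfolding supported_on_def cplx_def by auto
    have card_\<rho>: "card \<rho> = d + 1" using False assms(1) unfolding chain_def by auto
    have "finite \<sigma>" "card \<sigma> \<le> card \<rho>"
      using \<sigma>(1) assms(3) card_\<rho> simplex_finite by auto
    then have "\<rho> = \<sigma>" using \<sigma>(2) card_seteq by blast
    then show ?thesis using \<sigma>(1) card_\<rho> by simp
  qed simp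
qed

theorem lemma3p1:
  fixes n d :: nat and D :: "nat set set" and Z :: "nat set \<Rightarrow> 'a::field"
  assumes "d \<ge> 1"
    and "\<forall>\<sigma>\<in>D. simplex n \<sigma> \<and> card \<sigma> \<le> d + 1"
    and "card D \<le> d"
    and "is_cycle n d (cplx D) Z"
  shows "is_boundary n d (cplx D) Z \<and>
         (\<exists>c. Z = bd n (\<lambda>\<sigma>. if \<sigma> \<in> D \<and> card \<sigma> = d + 1 then c \<sigma> else 0))"
proof -
  have "\<forall>\<sigma>\<in>D. simplex n \<sigma>" using assms(2) by blast
  then have boundary: "is_boundary n d (cplx D) Z"
    using cycle_is_boundary_few_simplices assms(3,4) by blast
  then obtain B where B: "chain n (d + 1) B" "supported_on B (cplx D)" "Z = bd n B"
    unfolding is_boundary_def by blast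
  then have "Z = bd n (\<lambda>\<sigma>. if \<sigma> \<in> D \<and> card \<sigma> = d + 1 then B \<sigma> else 0)"
    using top_chain_on_simplices[OF B(1,2) assms(2)] by simp
  with boundary show ?thesis by blast
qed

end
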